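(* Let $(X,\tau)$ be a topological space, $\delta$ a quasi-proximity compatible with $\tau$ such that $\mathcal{V}_\delta$ is transitive, $\mathcal{B}=\mathcal{B}(\mathcal{V}_\delta)$, and let $\mathcal{V}$ be a transitive quasi-uniformity on $X$. Then $\mathcal{V}\in\pi(\delta)$ if and only if $\mathcal{V}_\delta\subseteq\mathcal{V}$ and for every transitive $U\in\mathcal{V}$ and every $A\subseteq X$ we have $U(A)\in\mathcal{B}$.
   Context: Quasi-uniformities and quasi-proximities are in the sense of Fletcher–Lindgren. $\pi(\delta)$ is the set of quasi-uniformities inducing the quasi-proximity $\delta$; $\mathcal{V}_\delta$ is its coarsest (totally bounded) element. A quasi-uniformity is transitive if it has a base of transitive entourages ($U\circ U\subseteq U$). $U(A)=\bigcup_{a\in A}\{y:(a,y)\in U\}$. For $N\subseteq X$, $U_N=(N\times N)\cup((X\setminus N)\times X)$ and $\mathcal{B}(\mathcal{V}_\delta)=\{N\in\tau:U_N\in\mathcal{V}_\delta\}$, an l-base of $\tau$ (closed under finite unions and intersections, containing $\emptyset,X$). *)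

theory Defs
  imports "HOL-Analysis.Analysis"
begin

definition quasi_uniformity :: "'a set \<Rightarrow> ('a \<times> 'a) set set \<Rightarrow> bool" where
  "quasi_uniformity X \<U> \<longleftrightarrow>
     \<U> \<noteq> {} \<and>
     (\<forall>U\<in>\<U>. Id_on X \<subseteq> U \<and> U \<subseteq> X \<times> X) \<and>
     (\<forall>U\<in>\<U>. \<forall>W. U \<subseteq> W \<and> W \<subseteq> X \<times> X \<longrightarrow> W \<in> \<U>) \<and>
     (\<forall>U\<in>\<U>. \<forall>V\<in>\<U>. U \<inter> V \<in> \<U>) \<and>
     (\<forall>U\<in>\<U>. \<exists>V\<in>\<U>. V O V \<subseteq> U)"

definition quasi_proximity :: "'a set \<Rightarrow> ('a set \<Rightarrow> 'a set \<Rightarrow> bool) \<Rightarrow> bool" where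
  "quasi_proximity X \<delta> \<longleftrightarrow>
     (\<forall>A B C. A \<subseteq> X \<and> B \<subseteq> X \<and> C \<subseteq> X \<longrightarrow>
        (\<delta> A (B \<union> C) \<longleftrightarrow> \<delta> A B \<or> \<delta> A C) \<and>
        (\<delta> (A \<union> B) C \<longleftrightarrow> \<delta> A C \<or> \<delta> B C)) \<and>
     \<not> \<delta> X {} \<and> \<not> \<delta> {} X \<and>
     (\<forall>A B. A \<subseteq> X \<and> B \<subseteq> X \<and> A \<inter> B \<noteq> {} \<longrightarrow> \<delta> A B) \<and>
     (\<forall>A B. A \<subseteq> X \<and> B \<subseteq> X \<and> \<not> \<delta> A B \<longrightarrow>
        (\<exists>C\<subseteq>X. \<not> \<delta> A C \<and> \<not> \<delta> (X - C) B))"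

definition qprox_compatible :: "'a topology \<Rightarrow> ('a set \<Rightarrow> 'a set \<Rightarrow> bool) \<Rightarrow> bool" where
  "qprox_compatible \<tau> \<delta> \<longleftrightarrow>
     (\<forall>A x. A \<subseteq> topspace \<tau> \<and> x \<in> topspace \<tau> \<longrightarrow>
        (x \<in> \<tau> closure_of A \<longleftrightarrow> \<delta> {x} A))"

definition qprox_of :: "('a \<times> 'a) set set \<Rightarrow> 'a set \<Rightarrow> 'a set \<Rightarrow> bool" where
  "qprox_of \<U> A B \<longleftrightarrow> (\<forall>U\<in>\<U>. U `` A \<inter> B \<noteq> {})"

definition qprox_class :: "'a set \<Rightarrow> ('a set \<Rightarrow> 'a set \<Rightarrow> bool) \<Rightarrow> ('a \<times> 'a) set set set" where
  "qprox_class X \<delta> = {\<U>. quasi_uniformity X \<U> \<and>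
      (\<forall>A B. A \<subseteq> X \<and> B \<subseteq> X \<longrightarrow> (qprox_of \<U> A B \<longleftrightarrow> \<delta> A B))}"

definition coarsest_qu :: "'a set \<Rightarrow> ('a set \<Rightarrow> 'a set \<Rightarrow> bool) \<Rightarrow> ('a \<times> 'a) set set" where
  "coarsest_qu X \<delta> = (THE \<V>. \<V> \<in> qprox_class X \<delta> \<and> (\<forall>\<W>\<in>qprox_class X \<delta>. \<V> \<subseteq> \<W>))"

definition transitive_qu :: "'a set \<Rightarrow> ('a \<times> 'a) set set \<Rightarrow> bool" where
  "transitive_qu X \<U> \<longleftrightarrow> quasi_uniformity X \<U> \<and> (\<forall>U\<in>\<U>. \<exists>W\<in>\<U>. trans W \<and> W \<subseteq> U)"

definition U_N :: "'a set \<Rightarrow> 'a set \<Rightarrow> ('a \<times> 'a) set" where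
  "U_N X N = (N \<times> N) \<union> ((X - N) \<times> X)"

definition lbase :: "'a topology \<Rightarrow> ('a \<times> 'a) set set \<Rightarrow> 'a set set" where
  "lbase \<tau> \<V> = {N. openin \<tau> N \<and> U_N (topspace \<tau>) N \<in> \<V>}"

end

theory Submission
  imports Defs
begin

text \<open>The coarsest quasi-uniformity \<open>\<V>\<^sub>\<delta>\<close> is generated by the entourages
  \<open>X \<times> X - A \<times> B\<close> for \<open>\<delta>\<close>-far pairs \<open>(A, B)\<close>; consequently \<open>U\<^sub>N \<in> \<V>\<^sub>\<delta>\<close> iff \<open>N\<close> is far
  from its complement, and such an \<open>N\<close> is open by compatibility. So the elements of
  \<open>\<B>(\<V>\<^sub>\<delta>)\<close> are exactly the sets far from their complements. If \<open>\<V>\<close> induces \<open>\<delta>\<close> and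
  \<open>U \<in> \<V>\<close> is transitive, then \<open>U(U(A)) \<subseteq> U(A)\<close>, so \<open>U(A)\<close> is far from its complement.
  Conversely, \<open>\<V>\<^sub>\<delta> \<subseteq> \<V>\<close> makes \<open>\<V>\<close>-near sets \<open>\<delta>\<close>-near, and if \<open>A \<delta> B\<close> then for each
  transitive \<open>U \<in> \<V>\<close> the set \<open>U(A) \<supseteq> A\<close>, being far from its complement, must meet \<open>B\<close>.\<close>

lemma qprox_Un_left:
  assumes "quasi_proximity X \<delta>" "A \<subseteq> X" "B \<subseteq> X" "C \<subseteq> X"
  shows "\<delta> (A \<union> B) C \<longleftrightarrow> \<delta> A C \<or> \<delta> B C"
  using assms unfolding quasi_proximity_def by (elim conjE) simp

lemma qprox_Un_right:
  assumes "quasi_proximity X \<delta>" "A \<subseteq> X" "B \<subseteq> X" "C \<subseteq> X"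
  shows "\<delta> A (B \<union> C) \<longleftrightarrow> \<delta> A B \<or> \<delta> A C"
  using assms unfolding quasi_proximity_def by (elim conjE) simp

lemma qprox_overlap:
  "quasi_proximity X \<delta> \<Longrightarrow> A \<subseteq> X \<Longrightarrow> B \<subseteq> X \<Longrightarrow> A \<inter> B \<noteq> {} \<Longrightarrow> \<delta> A B"
  unfolding quasi_proximity_def by (elim conjE) simp

lemma qprox_separate:
  "quasi_proximity X \<delta> \<Longrightarrow> A \<subseteq> X \<Longrightarrow> B \<subseteq> X \<Longrightarrow> \<not> \<delta> A B \<Longrightarrow>
    \<exists>C\<subseteq>X. \<not> \<delta> A C \<and> \<not> \<delta> (X - C) B"
  unfolding quasi_proximity_def by (elim conjE) simp

lemma qprox_mono:
  assumes qp: "quasi_proximity X \<delta>" and "A \<subseteq> A'" "B \<subseteq> B'" "A' \<subseteq> X" "B' \<subseteq> X"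
    and "\<delta> A B"
  shows "\<delta> A' B'"
proof -
  have "\<delta> A' B"
    using qprox_Un_left[OF qp, of A A' B] assms by (simp add: Un_absorb1)
  then show ?thesis
    using qprox_Un_right[OF qp, of A' B B'] assms by (simp add: Un_absorb1)
qed

lemma qprox_empty:
  assumes qp: "quasi_proximity X \<delta>" and "A \<subseteq> X"
  shows "\<not> \<delta> A {}" and "\<not> \<delta> {} A"
proof -
  have "\<not> \<delta> X {}" "\<not> \<delta> {} X"
    using qp unfolding quasi_proximity_def by simp_all
  then show "\<not> \<delta> A {}" "\<not> \<delta> {} A"
    using qprox_mono[OF qp, of A X "{}" "{}"] qprox_mono[OF qp, of "{}" "{}" A X] assms by auto
qed

lemma quasi_uniformity_subset: "quasi_uniformity X \<U> \<Longrightarrow> U \<in> \<U> \<Longrightarrow> U \<subseteq> X \<times> X"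
  unfolding quasi_uniformity_def by (elim conjE) meson

lemma quasi_uniformity_Id_on: "quasi_uniformity X \<U> \<Longrightarrow> U \<in> \<U> \<Longrightarrow> Id_on X \<subseteq> U"
  unfolding quasi_uniformity_def by (elim conjE) meson

lemma quasi_uniformity_upclosed:
  "quasi_uniformity X \<U> \<Longrightarrow> U \<in> \<U> \<Longrightarrow> U \<subseteq> W \<Longrightarrow> W \<subseteq> X \<times> X \<Longrightarrow> W \<in> \<U>"
  unfolding quasi_uniformity_def by (elim conjE) meson

lemma quasi_uniformity_Int: "quasi_uniformity X \<U> \<Longrightarrow> U \<in> \<U> \<Longrightarrow> V \<in> \<U> \<Longrightarrow> U \<inter> V \<in> \<U>"
  unfolding quasi_uniformity_def by (elim conjE) meson

lemma quasi_uniformity_top: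
  assumes qu: "quasi_uniformity X \<U>"
  shows "X \<times> X \<in> \<U>"
proof -
  obtain U where "U \<in> \<U>"
    using qu unfolding quasi_uniformity_def by (elim conjE) blast
  then show ?thesis
    using quasi_uniformity_upclosed[OF qu] quasi_uniformity_subset[OF qu] by blast
qed

lemma quasi_uniformityI:
  assumes "\<U> \<noteq> {}"
    and "\<And>U. U \<in> \<U> \<Longrightarrow> Id_on X \<subseteq> U" "\<And>U. U \<in> \<U> \<Longrightarrow> U \<subseteq> X \<times> X"
    and "\<And>U W. U \<in> \<U> \<Longrightarrow> U \<subseteq> W \<Longrightarrow> W \<subseteq> X \<times> X \<Longrightarrow> W \<in> \<U>"
    and "\<And>U V. U \<in> \<U> \<Longrightarrow> V \<in> \<U> \<Longrightarrow> U \<inter> V \<in> \<U>"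
    and "\<And>U. U \<in> \<U> \<Longrightarrow> \<exists>V\<in>\<U>. V O V \<subseteq> U"
  shows "quasi_uniformity X \<U>"
  unfolding quasi_uniformity_def using assms by auto

lemma qprox_of_antimono: "\<U> \<subseteq> \<V> \<Longrightarrow> qprox_of \<V> A B \<Longrightarrow> qprox_of \<U> A B"
  unfolding qprox_of_def by blast

definition far_pairs :: "'a set \<Rightarrow> ('a set \<Rightarrow> 'a set \<Rightarrow> bool) \<Rightarrow> ('a set \<times> 'a set) set" where
  "far_pairs X \<delta> = {(A, B). A \<subseteq> X \<and> B \<subseteq> X \<and> \<not> \<delta> A B}"

definition avoiding_entourage :: "'a set \<Rightarrow> ('a set \<times> 'a set) set \<Rightarrow> ('a \<times> 'a) set" where
  "avoiding_entourage X F = X \<times> X - (\<Union>(A, B)\<in>F. A \<times> B)"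

definition qu_of_qprox :: "'a set \<Rightarrow> ('a set \<Rightarrow> 'a set \<Rightarrow> bool) \<Rightarrow> ('a \<times> 'a) set set" where
  "qu_of_qprox X \<delta> = {U. U \<subseteq> X \<times> X \<and>
     (\<exists>F. finite F \<and> F \<subseteq> far_pairs X \<delta> \<and> avoiding_entourage X F \<subseteq> U)}"

lemma qprox_classI:
  "quasi_uniformity X \<U> \<Longrightarrow> (\<And>A B. A \<subseteq> X \<Longrightarrow> B \<subseteq> X \<Longrightarrow> qprox_of \<U> A B \<longleftrightarrow> \<delta> A B) \<Longrightarrow>
    \<U> \<in> qprox_class X \<delta>"
  unfolding qprox_class_def by simp

lemma qprox_classD:
  assumes "\<U> \<in> qprox_class X \<delta>"
  shows "quasi_uniformity X \<U>" and "A \<subseteq> X \<Longrightarrow> B \<subseteq> X \<Longrightarrow> qprox_of \<U> A B \<longleftrightarrow> \<delta> A B"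
  using assms unfolding qprox_class_def by simp_all

lemma in_far_pairs_iff: "p \<in> far_pairs X \<delta> \<longleftrightarrow> fst p \<subseteq> X \<and> snd p \<subseteq> X \<and> \<not> \<delta> (fst p) (snd p)"
  unfolding far_pairs_def by (simp add: case_prod_beta)

lemma in_avoiding_entourage_iff:
  "(x, y) \<in> avoiding_entourage X F \<longleftrightarrow> x \<in> X \<and> y \<in> X \<and> (\<forall>A B. (A, B) \<in> F \<longrightarrow> x \<in> A \<longrightarrow> y \<notin> B)"
  unfolding avoiding_entourage_def by auto

lemma avoiding_entourage_subset: "avoiding_entourage X F \<subseteq> X \<times> X"
  unfolding avoiding_entourage_def by (rule Diff_subset)

lemma avoiding_entourage_empty: "avoiding_entourage X {} = X \<times> X"
  unfolding avoiding_entourage_def by simp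

lemma avoiding_entourage_insert:
  "avoiding_entourage X (insert (A, B) F) = (X \<times> X - A \<times> B) \<inter> avoiding_entourage X F"
  unfolding avoiding_entourage_def by (simp add: Diff_Un)

lemma avoiding_entourage_Un:
  "avoiding_entourage X (F \<union> G) = avoiding_entourage X F \<inter> avoiding_entourage X G"
  unfolding avoiding_entourage_def by (simp add: Diff_Un)

lemma avoiding_entourage_Image_disjoint: "avoiding_entourage X {(A, B)} `` A \<inter> B = {}"
  by (auto simp: in_avoiding_entourage_iff)

lemma qu_of_qproxI:
  "finite F \<Longrightarrow> F \<subseteq> far_pairs X \<delta> \<Longrightarrow> avoiding_entourage X F \<subseteq> U \<Longrightarrow> U \<subseteq> X \<times> X \<Longrightarrow>
    U \<in> qu_of_qprox X \<delta>"
  unfolding qu_of_qprox_def by blast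

lemma qu_of_qproxE:
  assumes "U \<in> qu_of_qprox X \<delta>"
  obtains F where "finite F" "F \<subseteq> far_pairs X \<delta>" "avoiding_entourage X F \<subseteq> U" "U \<subseteq> X \<times> X"
  using assms unfolding qu_of_qprox_def by auto

lemma avoiding_entourage_in_qu_of_qprox:
  "finite F \<Longrightarrow> F \<subseteq> far_pairs X \<delta> \<Longrightarrow> avoiding_entourage X F \<in> qu_of_qprox X \<delta>"
  using qu_of_qproxI[OF _ _ subset_refl avoiding_entourage_subset] .

lemma far_pair_in_qu_of_qprox:
  "A \<subseteq> X \<Longrightarrow> B \<subseteq> X \<Longrightarrow> \<not> \<delta> A B \<Longrightarrow> avoiding_entourage X {(A, B)} \<in> qu_of_qprox X \<delta>"
  by (rule avoiding_entourage_in_qu_of_qprox) (simp_all add: far_pairs_def)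

lemma avoiding_entourage_in_quasi_uniformity:
  assumes qu: "quasi_uniformity X \<U>" and "finite F"
    and "\<And>A B. (A, B) \<in> F \<Longrightarrow> X \<times> X - A \<times> B \<in> \<U>"
  shows "avoiding_entourage X F \<in> \<U>"
  using assms(2,3)
proof (induction F)
  case empty
  show ?case
    using quasi_uniformity_top[OF qu] by (simp add: avoiding_entourage_empty)
next
  case (insert p F)
  obtain A B where p: "p = (A, B)"
    by fastforce
  have "X \<times> X - A \<times> B \<in> \<U>" "avoiding_entourage X F \<in> \<U>"
    using insert p by simp_all
  then show ?case
    unfolding p avoiding_entourage_insert by (rule quasi_uniformity_Int[OF qu])
qed

lemma far_if_covered_by_far_pairs:
  assumes qp: "quasi_proximity X \<delta>" and "finite F" "F \<subseteq> far_pairs X \<delta>"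
    and "A \<subseteq> X" "B \<subseteq> X" "A \<times> B \<subseteq> (\<Union>(C, D)\<in>F. C \<times> D)"
  shows "\<not> \<delta> A B"
  using assms(2-6)
proof (induction F arbitrary: A B)
  case empty
  then have "A = {} \<or> B = {}" by auto
  then show ?case
    using qprox_empty[OF qp] empty.prems by blast
next
  case (insert p F)
  obtain C D where p: "p = (C, D)" and far: "C \<subseteq> X" "D \<subseteq> X" "\<not> \<delta> C D"
    using insert.prems(1) unfolding far_pairs_def by (cases p) auto
  have F: "F \<subseteq> far_pairs X \<delta>"
    using insert.prems(1) by simp
  have outside: "\<not> \<delta> (A - C) B"
    by (rule insert.IH[OF F]) (use insert.prems p in auto)
  have inside_near: "\<not> \<delta> (A \<inter> C) (B \<inter> D)"
    using qprox_mono[OF qp, of "A \<inter> C" C "B \<inter> D" D] far by blast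
  have inside_far: "\<not> \<delta> (A \<inter> C) (B - D)"
    by (rule insert.IH[OF F]) (use insert.prems p in auto)
  have "\<not> \<delta> (A \<inter> C) B"
    using qprox_Un_right[OF qp, of "A \<inter> C" "B \<inter> D" "B - D"] inside_near inside_far
      insert.prems by (auto simp: Int_Diff_Un)
  then show ?case
    using qprox_Un_left[OF qp, of "A \<inter> C" "A - C" B] outside insert.prems
    by (auto simp: Int_Diff_Un)
qed

lemma Id_on_subset_avoiding_entourage:
  assumes qp: "quasi_proximity X \<delta>" and "F \<subseteq> far_pairs X \<delta>"
  shows "Id_on X \<subseteq> avoiding_entourage X F"
proof -
  have "x \<notin> A \<inter> B" if "(A, B) \<in> F" for x A B
    using that assms qprox_overlap[OF qp, of A B] unfolding far_pairs_def by blast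
  then show ?thesis
    by (auto simp: Id_on_def in_avoiding_entourage_iff)
qed

text \<open>Each far pair \<open>(A, B)\<close> is split by a set \<open>C\<close> with \<open>A\<close> far from \<open>C\<close> and \<open>X - C\<close> far
  from \<open>B\<close>: a first step out of \<open>A\<close> lands in \<open>X - C\<close>, and a second one then avoids \<open>B\<close>.\<close>

lemma avoiding_entourage_square_root:
  assumes qp: "quasi_proximity X \<delta>" and F: "finite F" "F \<subseteq> far_pairs X \<delta>"
  obtains G where "finite G" "G \<subseteq> far_pairs X \<delta>"
    "avoiding_entourage X G O avoiding_entourage X G \<subseteq> avoiding_entourage X F"
proof -
  have "\<exists>C. C \<subseteq> X \<and> \<not> \<delta> (fst p) C \<and> \<not> \<delta> (X - C) (snd p)" if "p \<in> F" for p
    using that F(2) qprox_separate[OF qp, of "fst p" "snd p"] by (auto simp: in_far_pairs_iff)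
  then obtain c where c: "\<And>p. p \<in> F \<Longrightarrow> c p \<subseteq> X \<and> \<not> \<delta> (fst p) (c p) \<and> \<not> \<delta> (X - c p) (snd p)"
    by metis
  define G where "G = (\<lambda>p. (fst p, c p)) ` F \<union> (\<lambda>p. (X - c p, snd p)) ` F"
  have "finite G"
    using F(1) unfolding G_def by simp
  moreover have "G \<subseteq> far_pairs X \<delta>"
  proof
    fix q assume "q \<in> G"
    then obtain p where p: "p \<in> F" "q = (fst p, c p) \<or> q = (X - c p, snd p)"
      unfolding G_def by blast
    moreover have "p \<in> far_pairs X \<delta>"
      using p(1) F(2) by blast
    ultimately show "q \<in> far_pairs X \<delta>"
      using c[OF p(1)] by (auto simp: in_far_pairs_iff)
  qed
  moreover have "avoiding_entourage X G O avoiding_entourage X G \<subseteq> avoiding_entourage X F"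
  proof clarify
    fix x y w
    assume xy: "(x, y) \<in> avoiding_entourage X G" and yw: "(y, w) \<in> avoiding_entourage X G"
    have "w \<notin> B" if AB: "(A, B) \<in> F" "x \<in> A" for A B
    proof -
      have "(A, c (A, B)) \<in> G"
        unfolding G_def using rev_image_eqI[OF AB(1), of _ "\<lambda>p. (fst p, c p)"] by simp
      moreover have "(X - c (A, B), B) \<in> G"
        unfolding G_def using rev_image_eqI[OF AB(1), of _ "\<lambda>p. (X - c p, snd p)"] by simp
      ultimately have "y \<in> X - c (A, B)"
        using xy AB(2) unfolding in_avoiding_entourage_iff by blast
      then show "w \<notin> B"
        using yw \<open>(X - c (A, B), B) \<in> G\<close> unfolding in_avoiding_entourage_iff by blast
    qed
    then show "(x, w) \<in> avoiding_entourage X F"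
      using xy yw unfolding in_avoiding_entourage_iff by blast
  qed
  ultimately show ?thesis
    by (rule that)
qed

lemma quasi_uniformity_qu_of_qprox:
  assumes qp: "quasi_proximity X \<delta>"
  shows "quasi_uniformity X (qu_of_qprox X \<delta>)"
proof (rule quasi_uniformityI)
  show "qu_of_qprox X \<delta> \<noteq> {}"
    using avoiding_entourage_in_qu_of_qprox[of "{}" X \<delta>] by blast
  show "Id_on X \<subseteq> U" and "U \<subseteq> X \<times> X" if "U \<in> qu_of_qprox X \<delta>" for U
  proof -
    from that obtain F where "finite F" "F \<subseteq> far_pairs X \<delta>" "avoiding_entourage X F \<subseteq> U"
      and "U \<subseteq> X \<times> X"
      by (rule qu_of_qproxE)
    then show "Id_on X \<subseteq> U" and "U \<subseteq> X \<times> X"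
      using Id_on_subset_avoiding_entourage[OF qp] by blast+
  qed
  show "W \<in> qu_of_qprox X \<delta>" if "U \<in> qu_of_qprox X \<delta>" "U \<subseteq> W" "W \<subseteq> X \<times> X" for U W
  proof -
    from that(1) obtain F where F: "finite F" "F \<subseteq> far_pairs X \<delta>" "avoiding_entourage X F \<subseteq> U"
      and "U \<subseteq> X \<times> X"
      by (rule qu_of_qproxE)
    have "avoiding_entourage X F \<subseteq> W"
      using F(3) that(2) by (rule order_trans)
    then show ?thesis
      using qu_of_qproxI[OF F(1,2) _ that(3)] by blast
  qed
  show "U \<inter> V \<in> qu_of_qprox X \<delta>" if "U \<in> qu_of_qprox X \<delta>" "V \<in> qu_of_qprox X \<delta>" for U V
  proof -
    from that(1) obtain F where F: "finite F" "F \<subseteq> far_pairs X \<delta>" "avoiding_entourage X F \<subseteq> U"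
      and "U \<subseteq> X \<times> X"
      by (rule qu_of_qproxE)
    from that(2) obtain G where G: "finite G" "G \<subseteq> far_pairs X \<delta>" "avoiding_entourage X G \<subseteq> V"
      and "V \<subseteq> X \<times> X"
      by (rule qu_of_qproxE)
    have "avoiding_entourage X (F \<union> G) \<subseteq> U \<inter> V"
      using F(3) G(3) by (auto simp: avoiding_entourage_Un)
    moreover have "finite (F \<union> G)" "F \<union> G \<subseteq> far_pairs X \<delta>"
      using F G by simp_all
    ultimately show ?thesis
      using \<open>U \<subseteq> X \<times> X\<close> by (intro qu_of_qproxI) auto
  qed
  show "\<exists>V\<in>qu_of_qprox X \<delta>. V O V \<subseteq> U" if "U \<in> qu_of_qprox X \<delta>" for U
  proof -
    from that obtain F where F: "finite F" "F \<subseteq> far_pairs X \<delta>" "avoiding_entourage X F \<subseteq> U"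
      and "U \<subseteq> X \<times> X"
      by (rule qu_of_qproxE)
    obtain G where "finite G" "G \<subseteq> far_pairs X \<delta>"
      "avoiding_entourage X G O avoiding_entourage X G \<subseteq> avoiding_entourage X F"
      using avoiding_entourage_square_root[OF qp F(1,2)] .
    then show ?thesis
      using avoiding_entourage_in_qu_of_qprox F(3) by (meson order_trans)
  qed
qed

lemma qprox_of_qu_of_qprox:
  assumes qp: "quasi_proximity X \<delta>" and AB: "A \<subseteq> X" "B \<subseteq> X"
  shows "qprox_of (qu_of_qprox X \<delta>) A B \<longleftrightarrow> \<delta> A B"
proof
  assume near_qu: "qprox_of (qu_of_qprox X \<delta>) A B"
  show "\<delta> A B"
  proof (rule ccontr)
    assume "\<not> \<delta> A B"
    with near_qu have "avoiding_entourage X {(A, B)} `` A \<inter> B \<noteq> {}"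
      using far_pair_in_qu_of_qprox[OF AB] unfolding qprox_of_def by blast
    then show False
      by (simp add: avoiding_entourage_Image_disjoint)
  qed
next
  assume near: "\<delta> A B"
  show "qprox_of (qu_of_qprox X \<delta>) A B"
    unfolding qprox_of_def
  proof (intro ballI notI)
    fix U assume U: "U \<in> qu_of_qprox X \<delta>" and disjoint: "U `` A \<inter> B = {}"
    from U obtain F where F: "finite F" "F \<subseteq> far_pairs X \<delta>" "avoiding_entourage X F \<subseteq> U"
      and "U \<subseteq> X \<times> X"
      by (rule qu_of_qproxE)
    have "A \<times> B \<subseteq> (\<Union>(C, D)\<in>F. C \<times> D)"
    proof clarify
      fix x y assume xy: "x \<in> A" "y \<in> B"
      then have "(x, y) \<notin> avoiding_entourage X F"
        using disjoint F(3) by blast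
      moreover have "(x, y) \<in> X \<times> X"
        using xy AB by blast
      ultimately show "(x, y) \<in> (\<Union>(C, D)\<in>F. C \<times> D)"
        unfolding avoiding_entourage_def by (metis DiffI)
    qed
    then show False
      using far_if_covered_by_far_pairs[OF qp F(1,2) AB] near by blast
  qed
qed

lemma qu_of_qprox_in_qprox_class:
  "quasi_proximity X \<delta> \<Longrightarrow> qu_of_qprox X \<delta> \<in> qprox_class X \<delta>"
  by (intro qprox_classI quasi_uniformity_qu_of_qprox qprox_of_qu_of_qprox)

lemma qu_of_qprox_minimal:
  assumes "\<U> \<in> qprox_class X \<delta>"
  shows "qu_of_qprox X \<delta> \<subseteq> \<U>"
proof
  note qu = qprox_classD(1)[OF assms] and induces = qprox_classD(2)[OF assms]
  have far_in: "X \<times> X - A \<times> B \<in> \<U>" if "(A, B) \<in> F" "F \<subseteq> far_pairs X \<delta>" for A B F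
  proof -
    have "A \<subseteq> X" "B \<subseteq> X" "\<not> \<delta> A B"
      using that unfolding far_pairs_def by auto
    then obtain V where V: "V \<in> \<U>" "V `` A \<inter> B = {}"
      using induces unfolding qprox_of_def by blast
    then have "V \<subseteq> X \<times> X - A \<times> B"
      using quasi_uniformity_subset[OF qu] by blast
    then show ?thesis
      using quasi_uniformity_upclosed[OF qu V(1)] by blast
  qed
  fix U assume "U \<in> qu_of_qprox X \<delta>"
  then obtain F where F: "finite F" "F \<subseteq> far_pairs X \<delta>" "avoiding_entourage X F \<subseteq> U"
    and U: "U \<subseteq> X \<times> X"
    by (rule qu_of_qproxE)
  have "avoiding_entourage X F \<in> \<U>"
    using avoiding_entourage_in_quasi_uniformity[OF qu F(1)] far_in[OF _ F(2)] by blast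
  then show "U \<in> \<U>"
    using quasi_uniformity_upclosed[OF qu _ F(3) U] by blast
qed

lemma coarsest_qu_eq_qu_of_qprox:
  assumes "quasi_proximity X \<delta>"
  shows "coarsest_qu X \<delta> = qu_of_qprox X \<delta>"
  unfolding coarsest_qu_def
  using qu_of_qprox_in_qprox_class[OF assms] qu_of_qprox_minimal
  by (intro the_equality) auto

lemma U_N_in_qu_of_qprox_iff:
  assumes qp: "quasi_proximity X \<delta>" and N: "N \<subseteq> X"
  shows "U_N X N \<in> qu_of_qprox X \<delta> \<longleftrightarrow> \<not> \<delta> N (X - N)"
proof
  assume "U_N X N \<in> qu_of_qprox X \<delta>"
  moreover have "U_N X N `` N \<inter> (X - N) = {}"
    unfolding U_N_def by auto
  ultimately have "\<not> qprox_of (qu_of_qprox X \<delta>) N (X - N)"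
    unfolding qprox_of_def by blast
  then show "\<not> \<delta> N (X - N)"
    using qprox_of_qu_of_qprox[OF qp N Diff_subset] by simp
next
  assume "\<not> \<delta> N (X - N)"
  then have "avoiding_entourage X {(N, X - N)} \<in> qu_of_qprox X \<delta>"
    using N by (intro far_pair_in_qu_of_qprox) auto
  moreover have "avoiding_entourage X {(N, X - N)} \<subseteq> U_N X N"
    unfolding U_N_def by (auto simp: in_avoiding_entourage_iff)
  moreover have "U_N X N \<subseteq> X \<times> X"
    using N unfolding U_N_def by auto
  ultimately show "U_N X N \<in> qu_of_qprox X \<delta>"
    using quasi_uniformity_upclosed[OF quasi_uniformity_qu_of_qprox[OF qp]] by blast
qed

lemma openin_if_far_from_complement:
  assumes qp: "quasi_proximity (topspace \<tau>) \<delta>" and compatible: "qprox_compatible \<tau> \<delta>"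
    and N: "N \<subseteq> topspace \<tau>" and far: "\<not> \<delta> N (topspace \<tau> - N)"
  shows "openin \<tau> N"
proof -
  have "\<tau> closure_of (topspace \<tau> - N) \<subseteq> topspace \<tau> - N"
  proof
    fix x assume x: "x \<in> \<tau> closure_of (topspace \<tau> - N)"
    then have "x \<in> topspace \<tau>"
      using closure_of_subset_topspace[of \<tau>] by blast
    with x compatible have near: "\<delta> {x} (topspace \<tau> - N)"
      unfolding qprox_compatible_def by blast
    have "x \<notin> N"
      using qprox_mono[OF qp _ subset_refl N Diff_subset near] far by blast
    with \<open>x \<in> topspace \<tau>\<close> show "x \<in> topspace \<tau> - N"
      by blast
  qed
  then show ?thesis
    using N closure_of_subset_eq[of "topspace \<tau> - N" \<tau>] by (simp add: openin_closedin)
qed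

lemma in_lbase_qu_of_qprox_iff:
  assumes qp: "quasi_proximity (topspace \<tau>) \<delta>" and compatible: "qprox_compatible \<tau> \<delta>"
  shows "N \<in> lbase \<tau> (qu_of_qprox (topspace \<tau>) \<delta>) \<longleftrightarrow> N \<subseteq> topspace \<tau> \<and> \<not> \<delta> N (topspace \<tau> - N)"
proof
  assume "N \<in> lbase \<tau> (qu_of_qprox (topspace \<tau>) \<delta>)"
  then have "openin \<tau> N" and U_N: "U_N (topspace \<tau>) N \<in> qu_of_qprox (topspace \<tau>) \<delta>"
    unfolding lbase_def by simp_all
  from \<open>openin \<tau> N\<close> have "N \<subseteq> topspace \<tau>"
    by (rule openin_subset)
  with U_N show "N \<subseteq> topspace \<tau> \<and> \<not> \<delta> N (topspace \<tau> - N)"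
    using U_N_in_qu_of_qprox_iff[OF qp] by blast
next
  assume "N \<subseteq> topspace \<tau> \<and> \<not> \<delta> N (topspace \<tau> - N)"
  then show "N \<in> lbase \<tau> (qu_of_qprox (topspace \<tau>) \<delta>)"
    unfolding lbase_def
    using U_N_in_qu_of_qprox_iff[OF qp] openin_if_far_from_complement[OF qp compatible] by simp
qed

lemma trans_Image_far_from_complement:
  assumes \<U>: "\<U> \<in> qprox_class X \<delta>" and U: "U \<in> \<U>" "trans U"
  shows "\<not> \<delta> (U `` A) (X - U `` A)"
proof -
  have "U `` A \<subseteq> X"
    using quasi_uniformity_subset[OF qprox_classD(1)[OF \<U>] U(1)] by blast
  have "U `` (U `` A) \<inter> (X - U `` A) = {}"
    using U(2) unfolding trans_def by blast
  then have "\<not> qprox_of \<U> (U `` A) (X - U `` A)"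
    using U(1) unfolding qprox_of_def by blast
  then show ?thesis
    using qprox_classD(2)[OF \<U> \<open>U `` A \<subseteq> X\<close> Diff_subset] by simp
qed

lemma meets_if_near_and_far_from_complement:
  assumes qp: "quasi_proximity X \<delta>" and "A \<subseteq> N" "N \<subseteq> X" "B \<subseteq> X"
    and "\<delta> A B" "\<not> \<delta> N (X - N)"
  shows "N \<inter> B \<noteq> {}"
proof
  assume "N \<inter> B = {}"
  then have "B \<subseteq> X - N"
    using assms(4) by blast
  then show False
    using qprox_mono[OF qp \<open>A \<subseteq> N\<close> _ \<open>N \<subseteq> X\<close> Diff_subset \<open>\<delta> A B\<close>] assms(6) by blast
qed

lemma in_qprox_class_if_far_Images:
  assumes qp: "quasi_proximity X \<delta>" and \<V>: "transitive_qu X \<V>" and finer: "qu_of_qprox X \<delta> \<subseteq> \<V>"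
    and far: "\<And>U A. U \<in> \<V> \<Longrightarrow> trans U \<Longrightarrow> A \<subseteq> X \<Longrightarrow> \<not> \<delta> (U `` A) (X - U `` A)"
  shows "\<V> \<in> qprox_class X \<delta>"
proof -
  have qu: "quasi_uniformity X \<V>"
    using \<V> unfolding transitive_qu_def by blast
  have "qprox_of \<V> A B \<longleftrightarrow> \<delta> A B" if AB: "A \<subseteq> X" "B \<subseteq> X" for A B
  proof
    assume "qprox_of \<V> A B"
    then show "\<delta> A B"
      using qprox_of_antimono[OF finer] qprox_of_qu_of_qprox[OF qp AB] by simp
  next
    assume near: "\<delta> A B"
    show "qprox_of \<V> A B"
      unfolding qprox_of_def
    proof
      fix U assume "U \<in> \<V>"
      then obtain W where W: "W \<in> \<V>" "trans W" "W \<subseteq> U"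
        using \<V> unfolding transitive_qu_def by blast
      have "A \<subseteq> W `` A"
        using quasi_uniformity_Id_on[OF qu W(1)] AB(1) by blast
      moreover have "W `` A \<subseteq> X"
        using quasi_uniformity_subset[OF qu W(1)] by blast
      ultimately have "W `` A \<inter> B \<noteq> {}"
        using meets_if_near_and_far_from_complement[OF qp _ _ AB(2) near far[OF W(1,2) AB(1)]]
        by blast
      then show "U `` A \<inter> B \<noteq> {}"
        using W(3) by blast
    qed
  qed
  with qu show ?thesis
    by (rule qprox_classI)
qed

theorem corollary2p5:
  fixes \<tau> :: "'a topology" and \<delta> :: "'a set \<Rightarrow> 'a set \<Rightarrow> bool"
    and \<V> :: "('a \<times> 'a) set set"
  assumes "quasi_proximity (topspace \<tau>) \<delta>"
    and "qprox_compatible \<tau> \<delta>"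
    and "transitive_qu (topspace \<tau>) (coarsest_qu (topspace \<tau>) \<delta>)"
    and "transitive_qu (topspace \<tau>) \<V>"
  shows "\<V> \<in> qprox_class (topspace \<tau>) \<delta> \<longleftrightarrow>
           (coarsest_qu (topspace \<tau>) \<delta> \<subseteq> \<V> \<and>
            (\<forall>U\<in>\<V>. trans U \<longrightarrow>
               (\<forall>A. A \<subseteq> topspace \<tau> \<longrightarrow> U `` A \<in> lbase \<tau> (coarsest_qu (topspace \<tau>) \<delta>))))"
proof -
  define X where "X = topspace \<tau>"
  have qp: "quasi_proximity X \<delta>" and \<V>: "transitive_qu X \<V>"
    using assms(1,4) by (simp_all add: X_def)
  then have qu: "quasi_uniformity X \<V>"
    unfolding transitive_qu_def by blast
  have base: "N \<in> lbase \<tau> (qu_of_qprox X \<delta>) \<longleftrightarrow> N \<subseteq> X \<and> \<not> \<delta> N (X - N)" for N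
    using in_lbase_qu_of_qprox_iff[OF assms(1,2)] by (simp add: X_def)
  have Image_subset: "U `` A \<subseteq> X" if "U \<in> \<V>" for U A
    using quasi_uniformity_subset[OF qu that] by blast
  show ?thesis
    unfolding X_def[symmetric] coarsest_qu_eq_qu_of_qprox[OF qp] base
  proof (intro iffI conjI ballI impI allI)
    assume \<V>_class: "\<V> \<in> qprox_class X \<delta>"
    then show "qu_of_qprox X \<delta> \<subseteq> \<V>"
      by (rule qu_of_qprox_minimal)
    show "U `` A \<subseteq> X" if "U \<in> \<V>" for U A
      using that by (rule Image_subset)
    show "\<not> \<delta> (U `` A) (X - U `` A)" if "U \<in> \<V>" "trans U" for U A
      using \<V>_class that by (rule trans_Image_far_from_complement)
  next
    assume "qu_of_qprox X \<delta> \<subseteq> \<V> \<and>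
      (\<forall>U\<in>\<V>. trans U \<longrightarrow> (\<forall>A. A \<subseteq> X \<longrightarrow> U `` A \<subseteq> X \<and> \<not> \<delta> (U `` A) (X - U `` A)))"
    then have finer: "qu_of_qprox X \<delta> \<subseteq> \<V>"
      and far: "\<And>U A. U \<in> \<V> \<Longrightarrow> trans U \<Longrightarrow> A \<subseteq> X \<Longrightarrow> \<not> \<delta> (U `` A) (X - U `` A)"
      by simp_all
    show "\<V> \<in> qprox_class X \<delta>"
      using qp \<V> finer far by (rule in_qprox_class_if_far_Images)
  qed
qed

end
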